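(* Let $\delta_\ell=94/194$. Let $G=(V,E)$ be an $(n-4)$-regular graph on $n>4$ nodes in which every clique has at most $\delta_\ell n$ nodes. Let $V_i\subseteq V$ with $|V_i|=(\frac12+\delta)n$ for some $0<\delta<\frac12$, and let $\widehat{\alpha}\,n$ be the number of nodes of a largest clique in the subgraph induced by $V\setminus V_i$. Then $$n(n-4)\,\mathsf M(V_i)\le\Big(4\delta^2-\delta-\tfrac12+2\widehat\alpha\Big)n\le\Big(2\delta_\ell-\tfrac12\Big)n.$$
   Context: For a finite simple undirected graph $G=(V,E)$ with $m=|E|\ge1$ edges, degrees $d_v$, and $a_{u,v}=1$ if $\{u,v\}\in E$ and $0$ otherwise: for $C\subseteq V$, $\mathsf M(C)=\frac{1}{2m}\sum_{u\in C}\sum_{v\in C}\big(a_{u,v}-\frac{d_ud_v}{2m}\big)$, the sum over all ordered pairs including $u=v$. *)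

theory Defs
  imports "HOL-Analysis.Analysis"
begin

definition simple_graph :: "'a set \<Rightarrow> 'a set set \<Rightarrow> bool" where
  "simple_graph V E \<longleftrightarrow> finite V \<and> (\<forall>e\<in>E. \<exists>u v. e = {u, v} \<and> u \<noteq> v \<and> u \<in> V \<and> v \<in> V)"

definition adj :: "'a set set \<Rightarrow> 'a \<Rightarrow> 'a \<Rightarrow> real" where
  "adj E u v = (if {u, v} \<in> E then 1 else 0)"

definition degree :: "'a set set \<Rightarrow> 'a \<Rightarrow> nat" where
  "degree E v = card {u. {u, v} \<in> E}"

definition num_edges :: "'a set set \<Rightarrow> nat" where
  "num_edges E = card E"

text \<open>Modularity of a vertex set C (sum over all ordered pairs, including u = v).\<close>
definition modularity :: "'a set set \<Rightarrow> 'a set \<Rightarrow> real" where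
  "modularity E C = 1 / (2 * real (num_edges E)) *
     (\<Sum>u\<in>C. \<Sum>v\<in>C. adj E u v - real (degree E u) * real (degree E v) / (2 * real (num_edges E)))"

definition regular :: "'a set \<Rightarrow> 'a set set \<Rightarrow> nat \<Rightarrow> bool" where
  "regular V E k \<longleftrightarrow> (\<forall>v\<in>V. degree E v = k)"

definition clique :: "'a set set \<Rightarrow> 'a set \<Rightarrow> bool" where
  "clique E K \<longleftrightarrow> (\<forall>u\<in>K. \<forall>v\<in>K. u \<noteq> v \<longrightarrow> {u, v} \<in> E)"

text \<open>Number of nodes of a largest clique in the subgraph of (V,E) induced by S \<subseteq> V
  (cliques of the induced subgraph are exactly the cliques of G contained in S).\<close>
definition max_clique_size :: "'a set set \<Rightarrow> 'a set \<Rightarrow> nat" where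
  "max_clique_size E S = Max {card K | K. K \<subseteq> S \<and> clique E K}"

definition delta_l :: real where
  "delta_l = 94 / 194"

end

theory Submission
  imports Defs
begin

text \<open>
  Work in the complement graph: nb E u v indicates a non-adjacent pair
  of distinct vertices, and nonadj E A B counts such ordered pairs between A and B.
  In an (n-4)-regular graph on n vertices every vertex has exactly 3 non-neighbours,
  so with C = V - Vi double counting gives nonadj Vi Vi = nonadj C C + 3(|Vi| - |C|).
  Greedily deleting one endpoint of a non-adjacent pair shows that C contains a clique K
  with 2(|C| - |K|) <= nonadj C C, and |K| is at most the largest clique in C.
  The modularity of Vi in a d-regular graph is, after the handshake lemma 2m = n d,
  an explicit expression in |Vi| and nonadj Vi Vi; inserting the two bounds gives the
  first inequality.  The second one is the elementary estimate
  4 delta^2 - delta + 2 alpha <= 2 b for alpha <= b, alpha <= 1/2 - delta, b >= 1/4.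
\<close>

lemma simple_graph_no_loop:
  assumes "simple_graph V E" shows "{u} \<notin> E"
proof
  assume "{u} \<in> E"
  then obtain a b where "{u} = {a, b}" "a \<noteq> b"
    using assms by (auto simp: simple_graph_def)
  then show False by (metis doubleton_eq_iff insert_absorb2)
qed

lemma simple_graph_edge_in_vertices:
  assumes "simple_graph V E" and "{w, u} \<in> E" shows "w \<in> V"
  using assms by (auto simp: simple_graph_def doubleton_eq_iff)

lemma simple_graph_finite_edges:
  assumes "simple_graph V E" shows "finite E"
proof (rule finite_subset)
  show "E \<subseteq> Pow V" using assms by (auto simp: simple_graph_def)
  show "finite (Pow V)" using assms by (simp add: simple_graph_def)
qed

lemma degree_eq_card_incident:
  assumes "simple_graph V E" shows "degree E u = card {e\<in>E. u \<in> e}"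
proof -
  have "bij_betw (\<lambda>w. {w, u}) {w. {w, u} \<in> E} {e\<in>E. u \<in> e}"
  proof (rule bij_betwI')
    fix x y show "({x, u} = {y, u}) = (x = y)" by (auto simp: doubleton_eq_iff)
  next
    fix e assume e: "e \<in> {e\<in>E. u \<in> e}"
    then obtain a b where ab: "e = {a, b}" using assms by (auto simp: simple_graph_def)
    show "\<exists>x\<in>{w. {w, u} \<in> E}. e = {x, u}"
    proof (cases "u = a")
      case True then show ?thesis using e ab by (intro bexI[of _ b]) (auto simp: insert_commute)
    next
      case False then show ?thesis using e ab by (intro bexI[of _ a]) auto
    qed
  qed auto
  then show ?thesis unfolding degree_def by (rule bij_betw_same_card)
qed

text \<open>Handshake lemma: every edge has exactly two endpoints in V.\<close>
lemma handshake:
  assumes "simple_graph V E" shows "(\<Sum>u\<in>V. degree E u) = 2 * card E"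
proof -
  have finV: "finite V" using assms by (simp add: simple_graph_def)
  have "(\<Sum>u\<in>V. card {e\<in>E. u \<in> e}) = (\<Sum>e\<in>E. card {u\<in>V. u \<in> e})"
    using sum.swap_restrict[OF finV simple_graph_finite_edges[OF assms],
        of "\<lambda>_ _. (1::nat)" "\<lambda>u e. u \<in> e"] by simp
  also have "\<dots> = (\<Sum>e\<in>E. 2)"
  proof (rule sum.cong)
    fix e assume "e \<in> E"
    then obtain a b where "e = {a, b}" "a \<noteq> b" "a \<in> V" "b \<in> V"
      using assms by (auto simp: simple_graph_def)
    then have "{u\<in>V. u \<in> e} = {a, b}" by auto
    then show "card {u\<in>V. u \<in> e} = 2" using \<open>a \<noteq> b\<close> by simp
  qed simp
  finally show ?thesis by (simp add: degree_eq_card_incident[OF assms])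
qed

lemma regular_twice_edges:
  assumes "simple_graph V E" and "regular V E d" and "card V = n"
  shows "2 * real (num_edges E) = real n * real d"
proof -
  have "(\<Sum>u\<in>V. degree E u) = n * d"
    using assms(2,3) by (simp add: regular_def)
  then show ?thesis
    using handshake[OF assms(1)] unfolding num_edges_def by (metis of_nat_mult of_nat_numeral)
qed

definition nb :: "'a set set \<Rightarrow> 'a \<Rightarrow> 'a \<Rightarrow> real" where
  "nb E u v = (if u \<noteq> v \<and> {u, v} \<notin> E then 1 else 0)"

definition nonadj :: "'a set set \<Rightarrow> 'a set \<Rightarrow> 'a set \<Rightarrow> real" where
  "nonadj E A B = (\<Sum>x\<in>A. \<Sum>y\<in>B. nb E x y)"

lemma nb_sym: "nb E u v = nb E v u"
  by (simp add: nb_def insert_commute eq_commute)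

lemma nb_nonneg: "nb E u v \<ge> 0"
  by (simp add: nb_def)

lemma nonadj_sym: "nonadj E A B = nonadj E B A"
  unfolding nonadj_def by (subst sum.swap) (simp add: nb_sym)

lemma adj_eq_nb:
  assumes "simple_graph V E"
  shows "adj E u v = 1 - nb E u v - (if u = v then 1 else 0)"
  using simple_graph_no_loop[OF assms] by (auto simp: adj_def nb_def)

lemma nonneighbour_count:
  assumes "simple_graph V E" and "u \<in> V"
  shows "(\<Sum>v\<in>V. nb E u v) = real (card V) - 1 - real (degree E u)"
proof -
  have finV: "finite V" using assms by (simp add: simple_graph_def)
  have "{w. {w, u} \<in> E} = {v\<in>V. {u, v} \<in> E}"
    using simple_graph_edge_in_vertices[OF assms(1)] by (auto simp: insert_commute)
  then have "real (degree E u) = (\<Sum>v\<in>V. adj E u v)"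
    unfolding degree_def adj_def by (simp add: sum.If_cases finV Collect_conj_eq Int_commute)
  also have "\<dots> = real (card V) - (\<Sum>v\<in>V. nb E u v) - 1"
    using assms finV by (simp add: adj_eq_nb[OF assms(1)] sum_subtractf)
  finally show ?thesis by simp
qed

lemma inner_adj_sum:
  assumes "simple_graph V E" and "finite C"
  shows "(\<Sum>u\<in>C. \<Sum>v\<in>C. adj E u v) = real (card C)^2 - nonadj E C C - real (card C)"
proof -
  have "(\<Sum>u\<in>C. \<Sum>v\<in>C. adj E u v) = (\<Sum>u\<in>C. real (card C) - (\<Sum>v\<in>C. nb E u v) - 1)"
    by (rule sum.cong) (auto simp: adj_eq_nb[OF assms(1)] sum_subtractf assms(2))
  then show ?thesis by (simp add: sum_subtractf nonadj_def power2_eq_square)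
qed

lemma nonadj_balance:
  assumes finV: "finite V" and rows: "\<And>u. u \<in> V \<Longrightarrow> (\<Sum>v\<in>V. nb E u v) = r"
    and "A \<subseteq> V"
  shows "nonadj E A A = nonadj E (V - A) (V - A) + r * (real (card A) - real (card (V - A)))"
proof -
  define B where "B = V - A"
  have finA: "finite A" and finB: "finite B"
    using finite_subset[OF assms(3) finV] finV by (auto simp: B_def)
  have V: "V = A \<union> B" "A \<inter> B = {}" using assms(3) by (auto simp: B_def)
  have row: "nonadj E X V = r * real (card X)" if "X \<subseteq> V" for X
    unfolding nonadj_def using that rows by (simp add: subset_iff)
  have split: "nonadj E X V = nonadj E X A + nonadj E X B" for X
    unfolding nonadj_def using V finA finB by (simp add: sum.union_disjoint sum.distrib)
  show ?thesis
    using row[of A] row[of B] split[of A] split[of B] nonadj_sym[of E A B] assms(3)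
    by (simp add: B_def algebra_simps)
qed

lemma regular_modularity:
  assumes "simple_graph V E" and "regular V E d" and "card V = n" and "n > 0" and "d > 0"
    and "C \<subseteq> V"
  shows "real n * real d * modularity E C
       = real (card C)^2 - nonadj E C C - real (card C) - real (card C)^2 * real d / real n"
proof -
  have finC: "finite C"
    using finite_subset[OF assms(6)] assms(1) by (simp add: simple_graph_def)
  have twom: "2 * real (num_edges E) = real n * real d"
    using regular_twice_edges[OF assms(1-3)] .
  have "(\<Sum>u\<in>C. \<Sum>v\<in>C. adj E u v - real (degree E u) * real (degree E v) / (2 * real (num_edges E)))
      = (\<Sum>u\<in>C. \<Sum>v\<in>C. adj E u v - real d / real n)"
    using assms(2,6) \<open>d > 0\<close> by (intro sum.cong refl) (auto simp: regular_def subset_iff twom)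
  also have "\<dots> = (\<Sum>u\<in>C. \<Sum>v\<in>C. adj E u v) - real (card C)^2 * real d / real n"
    by (simp add: sum_subtractf power2_eq_square)
  finally show ?thesis
    unfolding modularity_def twom inner_adj_sum[OF assms(1) finC]
    using \<open>n > 0\<close> \<open>d > 0\<close> by (simp add: field_simps)
qed

text \<open>Every finite S contains a clique K with 2(|S| - |K|) non-adjacent ordered pairs in S:
  removing one endpoint of a non-adjacent pair destroys at least two such pairs.\<close>
lemma clique_bound:
  "finite S \<Longrightarrow> \<exists>K\<subseteq>S. clique E K \<and> 2 * (real (card S) - real (card K)) \<le> nonadj E S S"
proof (induction "card S" arbitrary: S rule: less_induct)
  case less
  show ?case
  proof (cases "\<forall>u\<in>S. \<forall>v\<in>S. nb E u v = 0")
    case True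
    then have "clique E S" unfolding clique_def nb_def by (auto split: if_splits)
    moreover have "0 \<le> nonadj E S S"
      unfolding nonadj_def by (intro sum_nonneg) (simp add: nb_nonneg)
    ultimately show ?thesis by auto
  next
    case False
    then obtain u v where uv: "u \<in> S" "v \<in> S" "nb E u v = 1" "u \<noteq> v"
      by (auto simp: nb_def split: if_splits)
    define S' where "S' = S - {u}"
    have S: "S = insert u S'" "u \<notin> S'" "finite S'" "v \<in> S'"
      using uv less.prems by (auto simp: S'_def)
    have cS: "card S = Suc (card S')" using S by simp
    from less.hyps[of S'] cS S(3) obtain K where K: "K \<subseteq> S'" "clique E K"
      "2 * (real (card S') - real (card K)) \<le> nonadj E S' S'" by auto
    have row_u: "1 \<le> (\<Sum>y\<in>S. nb E u y)"
      using member_le_sum[of v S "nb E u"] uv less.prems by (simp add: nb_nonneg)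
    have col_u: "1 \<le> (\<Sum>x\<in>S'. nb E x u)"
      using member_le_sum[of v S' "\<lambda>x. nb E x u"] S uv nb_sym[of E u v] by (simp add: nb_nonneg)
    have "nonadj E S S = (\<Sum>y\<in>S. nb E u y) + (\<Sum>x\<in>S'. nb E x u) + nonadj E S' S'"
      using S by (simp add: nonadj_def sum.distrib)
    then have "nonadj E S S \<ge> 2 + nonadj E S' S'" using row_u col_u by linarith
    then show ?thesis using K cS S by (intro exI[of _ K]) auto
  qed
qed

lemma max_clique_size_ge:
  assumes "finite S" and "K \<subseteq> S" and "clique E K"
  shows "card K \<le> max_clique_size E S"
  unfolding max_clique_size_def using assms by (intro Max_ge) auto

lemma max_clique_size_attained:
  assumes "finite S"
  shows "\<exists>K\<subseteq>S. clique E K \<and> max_clique_size E S = card K"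
proof -
  let ?Q = "{card K | K. K \<subseteq> S \<and> clique E K}"
  have "{} \<subseteq> S \<and> clique E {}" by (simp add: clique_def)
  then have "?Q \<noteq> {}" by blast
  moreover have "finite ?Q" using assms by simp
  ultimately have "Max ?Q \<in> ?Q" by (rule Max_in[rotated])
  then show ?thesis by (auto simp: max_clique_size_def)
qed

text \<open>Used for the second inequality: the case delta <= 1/4 needs alpha <= b,
  the case delta > 1/4 needs alpha <= 1/2 - delta.\<close>
lemma quadratic_clique_estimate:
  fixes \<delta> \<alpha> b :: real
  assumes "0 < \<delta>" "\<delta> < 1/2" "\<alpha> \<le> b" "\<alpha> \<le> 1/2 - \<delta>" "1/4 \<le> b"
  shows "4 * \<delta>^2 - \<delta> + 2 * \<alpha> \<le> 2 * b"
proof (cases "\<delta> \<le> 1/4")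
  case True
  have "\<delta> * (4 * \<delta> - 1) \<le> 0" using True assms(1) by (intro mult_nonneg_nonpos) auto
  then show ?thesis using assms(3) by (simp add: power2_eq_square algebra_simps)
next
  case False
  have "(4 * \<delta> - 1) * (2 * \<delta> - 1) \<le> 0" using False assms(2) by (intro mult_nonneg_nonpos) auto
  then show ?thesis using assms(4,5) by (simp add: power2_eq_square algebra_simps)
qed

theorem lemma7:
  fixes V :: "'a set" and E :: "'a set set" and n :: nat and Vi :: "'a set"
    and \<delta> :: real and alpha_hat :: real
  assumes "simple_graph V E"
    and "card V = n" and "n > 4"
    and "regular V E (n - 4)"
    and "\<forall>K. K \<subseteq> V \<and> clique E K \<longrightarrow> real (card K) \<le> delta_l * real n"
    and "Vi \<subseteq> V" and "real (card Vi) = (1/2 + \<delta>) * real n"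
    and "0 < \<delta>" and "\<delta> < 1/2"
    and "alpha_hat * real n = real (max_clique_size E (V - Vi))"
  shows "real n * (real n - 4) * modularity E Vi \<le> (4 * \<delta>^2 - \<delta> - 1/2 + 2 * alpha_hat) * real n
       \<and> (4 * \<delta>^2 - \<delta> - 1/2 + 2 * alpha_hat) * real n \<le> (2 * delta_l - 1/2) * real n"
proof -
  define C where "C = V - Vi"
  have finV: "finite V" and finC: "finite C" using assms(1) by (auto simp: simple_graph_def C_def)
  have npos: "real n > 4" and d: "real (n - 4) = real n - 4" using assms(3) by auto
  have cardC: "real (card C) = real n - real (card Vi)"
    using card_Diff_subset[OF finite_subset[OF assms(6) finV] assms(6)] card_mono[OF finV assms(6)]
      assms(2) by (simp add: C_def of_nat_diff)
  have rows: "(\<Sum>v\<in>V. nb E u v) = 3" if "u \<in> V" for u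
    using nonneighbour_count[OF assms(1) that] assms(2,4) that d by (simp add: regular_def)
  have modul: "real n * (real n - 4) * modularity E Vi = real (card Vi)^2 - nonadj E Vi Vi
      - real (card Vi) - real (card Vi)^2 * (real n - 4) / real n"
    using regular_modularity[OF assms(1,4,2) _ _ assms(6)] assms(3) d by simp
  have balance: "nonadj E Vi Vi = nonadj E C C + 3 * (real (card Vi) - real (card C))"
    using nonadj_balance[OF finV rows assms(6)] by (simp add: C_def)
  obtain K where K: "K \<subseteq> C" "clique E K" "2 * (real (card C) - real (card K)) \<le> nonadj E C C"
    using clique_bound[OF finC] by blast
  obtain K0 where K0: "K0 \<subseteq> C" "clique E K0" "alpha_hat * real n = real (card K0)"
    using max_clique_size_attained[OF finC, of E] assms(10) by (auto simp: C_def)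
  have "real (card K) \<le> alpha_hat * real n"
    using max_clique_size_ge[OF finC K(1,2)] assms(10) by (simp add: C_def)
  moreover have "real (card Vi)^2 * (real n - 4) / real n = real (card Vi)^2 - 4 * (1/2 + \<delta>)^2 * real n"
    using npos unfolding assms(7) by (simp add: field_simps power2_eq_square)
  ultimately have first: "real n * (real n - 4) * modularity E Vi
      \<le> (4 * \<delta>^2 - \<delta> - 1/2 + 2 * alpha_hat) * real n"
    unfolding modul balance using K(3) cardC assms(7)
    by (simp add: power2_eq_square algebra_simps)
  have "alpha_hat * real n \<le> delta_l * real n"
    using assms(5) K0 by (auto simp: C_def)
  moreover have "alpha_hat * real n \<le> (1/2 - \<delta>) * real n"
    using K0(3) card_mono[OF finC K0(1)] cardC assms(7) by (simp add: algebra_simps)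
  ultimately have "alpha_hat \<le> delta_l" "alpha_hat \<le> 1/2 - \<delta>"
    using npos by simp_all
  then have "4 * \<delta>^2 - \<delta> + 2 * alpha_hat \<le> 2 * delta_l"
    using assms(8,9) by (intro quadratic_clique_estimate) (auto simp: delta_l_def)
  then show ?thesis using first npos by (simp add: mult_right_mono)
qed

end
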